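(* For every $\epsilon>0$ there exists $\delta>0$ such that, for $k<e^{\delta n}$ (where $n$ is the number of variables), no deterministic online width-cut-$k$ algorithm can achieve an asymptotic approximation ratio of $5/6+\epsilon$ for unweighted max-2-sat with input model 3.
   Context: Unweighted max-2-sat: the input is a CNF formula whose clauses have at most two literals, each of weight 1; the goal is an assignment maximizing the number of satisfied clauses. Online: variables arrive one at a time in adversarial order and each must be irrevocably assigned upon arrival. In input model 3, the data item of a variable contains the complete description of every clause in which it occurs (names, weights, lengths, and all the other variables in those clauses together with their signs), separated into clauses where it appears positively and negatively. Width-cut-$k$ model: the algorithm maintains a tree of partial assignments with the empty assignment as root at level 0; when the $i$-th variable is processed each node at level $i-1$ may get any number of children (including zero), each extending it by a value for that variable; at most $k$ nodes exist at each level; at the end the best complete assignment is output. The asymptotic approximation ratio of $\mathbb{A}$ is $\liminf_{n}\inf_{I\in\mathcal{I}_n} v(\mathbb{A},I)/v(I)$. *)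

theory Defs
  imports Complex_Main "HOL-Library.Extended_Real" "HOL-Library.Liminf_Limsup"
begin

type_synonym var = nat
type_synonym literal = "var \<times> bool"   \<comment> \<open>(variable, sign); True = positive\<close>
type_synonym clause = "nat \<times> literal set"  \<comment> \<open>(clause name, literals); every weight is 1\<close>
type_synonym mi2sat = "var list \<times> clause set"
  \<comment> \<open>(arrival order of the variables, clauses)\<close>

definition order :: "mi2sat \<Rightarrow> var list" where "order I = fst I"
definition clauses :: "mi2sat \<Rightarrow> clause set" where "clauses I = snd I"
definition nvars :: "mi2sat \<Rightarrow> nat" where "nvars I = length (order I)"

definition valid_clause :: "clause \<Rightarrow> bool" where
  "valid_clause c \<longleftrightarrow> finite (snd c) \<and> snd c \<noteq> {} \<and> card (snd c) \<le> 2 \<and> inj_on fst (snd c)"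

definition valid_instance :: "mi2sat \<Rightarrow> bool" where
  "valid_instance I \<longleftrightarrow> distinct (order I) \<and> finite (clauses I)
     \<and> inj_on fst (clauses I)
     \<and> (\<forall>c\<in>clauses I. valid_clause c \<and> fst ` snd c \<subseteq> set (order I))"

text \<open>Input model 3 data item of variable x: its name together with the full description
  of all clauses in which it occurs positively, resp. negatively.\<close>
type_synonym data_item = "var \<times> clause set \<times> clause set"

definition item :: "mi2sat \<Rightarrow> var \<Rightarrow> data_item" where
  "item I x = (x, {c\<in>clauses I. (x, True) \<in> snd c}, {c\<in>clauses I. (x, False) \<in> snd c})"

text \<open>A deterministic online algorithm in the width-cut model: given the number of
  variables n and the data items seen so far, it returns the set of nodes (partial
  assignments, as lists of values in arrival order) at the current level of the tree.\<close>
type_synonym algorithm = "nat \<Rightarrow> data_item list \<Rightarrow> bool list set"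

definition level :: "algorithm \<Rightarrow> mi2sat \<Rightarrow> nat \<Rightarrow> bool list set" where
  "level A I i = (if i = 0 then {[]}
      else A (nvars I) (map (item I) (take i (order I))))"

definition width_cut :: "(nat \<Rightarrow> nat) \<Rightarrow> algorithm \<Rightarrow> bool" where
  "width_cut k A \<longleftrightarrow> (\<forall>I. valid_instance I \<longrightarrow> (\<forall>i\<in>{1..nvars I}.
      level A I i \<subseteq> {p @ [b] | p b. p \<in> level A I (i - 1)}
      \<and> card (level A I i) \<le> k (nvars I)))"

definition sat :: "(var \<Rightarrow> bool) \<Rightarrow> clause \<Rightarrow> bool" where
  "sat a c \<longleftrightarrow> (\<exists>(x, s)\<in>snd c. a x = s)"

definition num_sat :: "(var \<Rightarrow> bool) \<Rightarrow> mi2sat \<Rightarrow> nat" where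
  "num_sat a I = card {c\<in>clauses I. sat a c}"

definition opt :: "mi2sat \<Rightarrow> nat" where
  "opt I = Max ((\<lambda>a. num_sat a I) ` UNIV)"

definition leaf_assignment :: "mi2sat \<Rightarrow> bool list \<Rightarrow> var \<Rightarrow> bool" where
  "leaf_assignment I p x = (case map_of (zip (order I) p) x of Some b \<Rightarrow> b | None \<Rightarrow> False)"

text \<open>Value of the algorithm: best complete assignment among the leaves (0 if none).\<close>
definition alg_value :: "algorithm \<Rightarrow> mi2sat \<Rightarrow> nat" where
  "alg_value A I = Max (insert 0 ((\<lambda>p. num_sat (leaf_assignment I p) I) ` level A I (nvars I)))"

definition ratio :: "algorithm \<Rightarrow> mi2sat \<Rightarrow> real" where
  "ratio A I = (if opt I = 0 then 1 else real (alg_value A I) / real (opt I))"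

definition instances :: "nat \<Rightarrow> mi2sat set" where
  "instances n = {I. valid_instance I \<and> nvars I = n}"

definition asymptotic_ratio :: "algorithm \<Rightarrow> ereal" where
  "asymptotic_ratio A = liminf (\<lambda>n. INF I\<in>instances n. ereal (ratio A I))"

end

theory Submission
  imports Defs
begin

text \<open>
  For each hidden bit string \<open>s\<close> of length \<open>m\<close> there is an instance on \<open>3m\<close> variables made of
  \<open>m\<close> gadgets \<open>(x\<^sub>i \<or> y\<^sub>i), (\<not>x\<^sub>i \<or> z\<^sub>i)\<close> plus \<open>\<not>y\<^sub>i\<close> if \<open>s\<^sub>i\<close> and \<open>\<not>z\<^sub>i\<close> otherwise. All clauses are
  simultaneously satisfiable, but an assignment satisfies all three clauses of gadget \<open>i\<close> only if \<open>x\<^sub>i = s\<^sub>i\<close>.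
  The \<open>x\<close>-variables arrive first and their data items do not depend on \<open>s\<close>, so the at most
  \<open>k\<close> nodes at level \<open>m\<close> of the tree are the same for all \<open>s\<close>. By an exponential-moment
  (Chernoff) bound, a fixed bit string agrees with at least \<open>(1/2 + \<epsilon>) m\<close> bits of a random
  \<open>s\<close> only with probability \<open>(R/2)\<^sup>m\<close> for some \<open>R < 2\<close>; so if \<open>k < (2/R)\<^sup>m\<close>, some \<open>s\<close> agrees
  with every node in fewer than \<open>(1/2 + \<epsilon>) m\<close> bits, and then every leaf satisfies at most
  \<open>(5/2 + \<epsilon>) m\<close> of the \<open>3m\<close> clauses.
\<close>

definition agreements :: "(nat \<Rightarrow> bool) \<Rightarrow> bool list \<Rightarrow> nat" where
  "agreements g s = (\<Sum>i<length s. if g i = s ! i then 1 else 0)"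

lemma agreements_Cons:
  "agreements g (b # s) = (if g 0 = b then 1 else 0) + agreements (g \<circ> Suc) s"
  unfolding agreements_def length_Cons sum.lessThan_Suc_shift by simp

lemma finite_bool_lists_length: "finite {s :: bool list. length s = m}"
  using finite_lists_length_eq[of "UNIV :: bool set" m] by simp

lemma card_bool_lists_length: "card {s :: bool list. length s = m} = 2 ^ m"
  using card_lists_length_eq[of "UNIV :: bool set" m] by simp

lemma bool_lists_length_Suc:
  "{s :: bool list. length s = Suc m} = (\<lambda>(b, s). b # s) ` (UNIV \<times> {s. length s = m})"
  by (auto simp: length_Suc_conv)

lemma sum_power_agreements:
  fixes x :: "'a :: comm_semiring_1"
  shows "(\<Sum>s | length s = m. x ^ agreements g s) = (1 + x) ^ m"
proof (induction m arbitrary: g)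
  case 0
  then show ?case by (simp add: agreements_def)
next
  case (Suc m)
  have inj: "inj_on (\<lambda>(b, s). b # s) (UNIV \<times> {s :: bool list. length s = m})"
    by (auto simp: inj_on_def)
  have "(\<Sum>s | length s = Suc m. x ^ agreements g s)
      = (\<Sum>b\<in>UNIV. \<Sum>s | length s = m. x ^ agreements g (b # s))"
    unfolding bool_lists_length_Suc sum.reindex[OF inj]
    by (simp add: sum.cartesian_product split_beta)
  also have "\<dots> = (\<Sum>b\<in>UNIV. x ^ (if g 0 = b then 1 else 0) * (1 + x) ^ m)"
    by (simp add: agreements_Cons power_add sum_distrib_left[symmetric] Suc.IH)
  also have "\<dots> = (1 + x) ^ Suc m"
    by (simp add: UNIV_bool algebra_simps)
  finally show ?case .
qed

lemma card_many_agreements_le: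
  fixes \<theta> :: real
  assumes x: "x > 1"
  shows "real (card {s. length s = m \<and> \<theta> * m \<le> agreements g s}) \<le> ((1 + x) / x powr \<theta>) ^ m"
proof -
  define B where "B = {s. length s = m \<and> \<theta> * m \<le> agreements g s}"
  have "real (card B) * (x powr \<theta>) ^ m = (\<Sum>s\<in>B. x powr (\<theta> * m))"
    using x by (simp add: powr_realpow[symmetric] powr_powr)
  also have "\<dots> \<le> (\<Sum>s\<in>B. x ^ agreements g s)"
  proof (rule sum_mono)
    fix s assume "s \<in> B"
    then have "x powr (\<theta> * m) \<le> x powr real (agreements g s)"
      using x by (intro powr_mono) (auto simp: B_def)
    then show "x powr (\<theta> * m) \<le> x ^ agreements g s"
      using x by (simp add: powr_realpow)
  qed
  also have "\<dots> \<le> (\<Sum>s | length s = m. x ^ agreements g s)"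
    using x by (intro sum_mono2[OF finite_bool_lists_length]) (auto simp: B_def)
  also have "\<dots> = (1 + x) ^ m"
    by (rule sum_power_agreements)
  finally show ?thesis
    using x by (simp add: B_def power_divide pos_le_divide_eq)
qed

lemma exists_list_few_agreements:
  fixes \<theta> :: real
  assumes L: "finite L" and x: "x > 1"
    and small: "real (card L) * ((1 + x) / x powr \<theta>) ^ m < 2 ^ m"
  shows "\<exists>s. length s = m \<and> (\<forall>q\<in>L. agreements (nth q) s < \<theta> * m)"
proof (rule ccontr)
  assume none: "\<not> ?thesis"
  define Bad where "Bad q = {s. length s = m \<and> \<theta> * m \<le> agreements (nth q) s}" for q
  then have cover: "{s :: bool list. length s = m} \<subseteq> (\<Union>q\<in>L. Bad q)"
    using none by (auto simp: not_less)
  have "finite (\<Union>q\<in>L. Bad q)"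
    using L finite_bool_lists_length by (auto simp: Bad_def)
  then have "2 ^ m \<le> card (\<Union>q\<in>L. Bad q)"
    using card_mono[OF _ cover] by (simp add: card_bool_lists_length)
  then have "(2 :: real) ^ m \<le> real (card (\<Union>q\<in>L. Bad q))"
    by (metis of_nat_le_iff of_nat_numeral of_nat_power)
  also have "\<dots> \<le> (\<Sum>q\<in>L. real (card (Bad q)))"
    using card_UN_le[OF L, of Bad] of_nat_mono by fastforce
  also have "\<dots> \<le> real (card L) * ((1 + x) / x powr \<theta>) ^ m"
    using sum_mono[of L "\<lambda>q. real (card (Bad q))" "\<lambda>_. ((1 + x) / x powr \<theta>) ^ m"]
      card_many_agreements_le[OF x] by (simp add: Bad_def)
  finally show False
    using small by simp
qed

lemma exists_chernoff_base:
  assumes "\<epsilon> > 0"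
  shows "\<exists>x :: real. x > 1 \<and> (1 + x) / x powr (1/2 + \<epsilon>) < 2"
proof -
  define f where "f t = ln (1 + t) - (1/2 + \<epsilon>) * ln t" for t :: real
  have "(f has_real_derivative (1/2 - (1/2 + \<epsilon>))) (at 1)"
    unfolding f_def by (auto intro!: derivative_eq_intros)
  then obtain d where d: "d > 0" "\<And>h. 0 < h \<Longrightarrow> h < d \<Longrightarrow> f (1 + h) < f 1"
    using DERIV_neg_dec_right assms by fastforce
  define x where "x = 1 + d / 2"
  have x: "x > 1" using d by (simp add: x_def)
  have "ln (1 + x) < ln 2 + (1/2 + \<epsilon>) * ln x"
    using d(2)[of "d / 2"] d(1) by (simp add: f_def x_def)
  also have "\<dots> = ln (2 * x powr (1/2 + \<epsilon>))"
    using x by (simp add: ln_mult ln_powr)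
  finally show ?thesis
    using x by (intro exI[of _ x]) (simp add: divide_less_eq)
qed

lemma width_cut_level_prefixes:
  assumes wc: "width_cut k A" and I: "valid_instance I"
    and "j \<le> nvars I" "p \<in> level A I j"
  shows "length p = j \<and> (\<forall>i\<le>j. take i p \<in> level A I i)"
  using assms(3,4)
proof (induction j arbitrary: p)
  case 0
  then show ?case by (simp add: level_def)
next
  case (Suc j)
  have "level A I (Suc j) \<subseteq> {q @ [b] | q b. q \<in> level A I j}"
    using wc Suc.prems(1) I unfolding width_cut_def by fastforce
  with Suc.prems(2) obtain q b where p: "p = q @ [b]" and q: "q \<in> level A I j"
    by auto
  with Suc.IH[OF _ q] Suc.prems show ?case
    by (auto simp: le_Suc_eq)
qed

lemma finite_level:
  assumes "width_cut k A" "valid_instance I" "j \<le> nvars I"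
  shows "finite (level A I j)"
  using width_cut_level_prefixes[OF assms]
  by (intro finite_subset[OF _ finite_bool_lists_length[of j]]) auto

lemma alg_value_le:
  assumes "width_cut k A" "valid_instance I" "c \<ge> 0"
    and "\<And>p. p \<in> level A I (nvars I) \<Longrightarrow> real (num_sat (leaf_assignment I p) I) \<le> c"
  shows "real (alg_value A I) \<le> c"
proof -
  define S where "S = insert 0 ((\<lambda>p. num_sat (leaf_assignment I p) I) ` level A I (nvars I))"
  have "finite S"
    using finite_level[OF assms(1,2)] by (simp add: S_def)
  then have "Max S \<in> S"
    by (rule Max_in) (simp add: S_def)
  then show ?thesis
    using assms(3,4) by (auto simp: alg_value_def S_def)
qed

text \<open>Variables \<open>i\<close>, \<open>m + i\<close>, \<open>2m + i\<close> play the roles of \<open>x\<^sub>i\<close>, \<open>y\<^sub>i\<close>, \<open>z\<^sub>i\<close>; clause \<open>j\<close> is clause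
  \<open>j mod 3\<close> of gadget \<open>j div 3\<close>, and only the third clause of each gadget depends on \<open>s\<close>.\<close>

definition gadget_clause :: "nat \<Rightarrow> bool list \<Rightarrow> nat \<Rightarrow> clause" where
  "gadget_clause m s j = (j,
     if j mod 3 = 0 then {(j div 3, True), (m + j div 3, True)}
     else if j mod 3 = 1 then {(j div 3, False), (2 * m + j div 3, True)}
     else if s ! (j div 3) then {(m + j div 3, False)}
     else {(2 * m + j div 3, False)})"

definition hard_instance :: "nat \<Rightarrow> bool list \<Rightarrow> mi2sat" where
  "hard_instance m s = ([0..<3 * m], gadget_clause m s ` {..<3 * m})"

lemma hard_instance_simps [simp]:
  "order (hard_instance m s) = [0..<3 * m]"
  "clauses (hard_instance m s) = gadget_clause m s ` {..<3 * m}"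
  "nvars (hard_instance m s) = 3 * m"
  by (simp_all add: hard_instance_def order_def clauses_def nvars_def)

lemma fst_gadget_clause [simp]: "fst (gadget_clause m s j) = j"
  by (simp add: gadget_clause_def)

lemma inj_gadget_clause: "inj_on (gadget_clause m s) A"
  by (metis fst_gadget_clause inj_on_def)

lemma valid_hard_instance:
  assumes "m \<ge> 1"
  shows "valid_instance (hard_instance m s)"
proof -
  have "valid_clause (gadget_clause m s j) \<and> fst ` snd (gadget_clause m s j) \<subseteq> {0..<3 * m}"
    if "j < 3 * m" for j
  proof -
    have "j div 3 < m" using that by auto
    then show ?thesis
      using assms by (auto simp: gadget_clause_def valid_clause_def card_insert_if)
  qed
  moreover have "inj_on fst (gadget_clause m s ` {..<3 * m})"
    by (auto simp: inj_on_def)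
  ultimately show ?thesis
    unfolding valid_instance_def by auto
qed

lemma gadget_clause_indep:
  assumes "x < m" "(x, b) \<in> snd (gadget_clause m s j)"
  shows "gadget_clause m s j = gadget_clause m s' j"
  using assms by (auto simp: gadget_clause_def split: if_splits)

lemma item_hard_instance_indep:
  assumes "x < m"
  shows "item (hard_instance m s) x = item (hard_instance m s') x"
proof -
  have "{c \<in> gadget_clause m s ` {..<3 * m}. (x, b) \<in> snd c}
      \<subseteq> {c \<in> gadget_clause m s' ` {..<3 * m}. (x, b) \<in> snd c}" for b s s'
    using gadget_clause_indep[OF assms, of b s _ s'] by force
  then show ?thesis
    unfolding item_def by (simp add: subset_antisym)
qed

lemma level_hard_instance_indep: "level A (hard_instance m s) m = level A (hard_instance m s') m"
proof -
  have "take m [0..<3 * m] = [0..<m]"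
    by (simp add: take_upt)
  moreover have "map (item (hard_instance m s)) [0..<m] = map (item (hard_instance m s')) [0..<m]"
    using item_hard_instance_indep by (intro map_cong) auto
  ultimately show ?thesis
    unfolding level_def hard_instance_simps by (simp only:)
qed

lemma num_sat_hard_instance:
  "num_sat a (hard_instance m s) = (\<Sum>j<3 * m. if sat a (gadget_clause m s j) then 1 else 0)"
proof -
  have "{c \<in> gadget_clause m s ` {..<3 * m}. sat a c}
      = gadget_clause m s ` {j \<in> {..<3 * m}. sat a (gadget_clause m s j)}"
    by auto
  then show ?thesis
    unfolding num_sat_def using card_image[OF inj_gadget_clause]
    by (simp add: sum.inter_filter[symmetric])
qed

lemma sum_lessThan_3_mult:
  fixes f :: "nat \<Rightarrow> 'a :: comm_monoid_add"
  shows "(\<Sum>j<3 * m. f j) = (\<Sum>i<m. f (3 * i) + f (3 * i + 1) + f (3 * i + 2))"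
proof -
  have "(\<Sum>j<3 * m. f j) = (\<Sum>i<m. sum f {i * 3..<i * 3 + 3})"
    by (simp add: sum.nat_group mult.commute)
  also have "\<dots> = (\<Sum>i<m. f (3 * i) + f (3 * i + 1) + f (3 * i + 2))"
    by (simp add: numeral_3_eq_3 mult.commute add.assoc)
  finally show ?thesis .
qed

lemma gadget_sat_le:
  "(if sat a (gadget_clause m s (3 * i)) then 1 else 0)
     + (if sat a (gadget_clause m s (3 * i + 1)) then 1 else 0)
     + (if sat a (gadget_clause m s (3 * i + 2)) then 1 else 0)
   \<le> (2 :: nat) + (if a i = s ! i then 1 else 0)"
proof -
  have "(3 * i) div 3 = i" "(3 * i + 1) div 3 = i" "(3 * i + 2) div 3 = i"
    "(3 * i) mod 3 = 0" "(3 * i + 1) mod 3 = 1" "(3 * i + 2) mod 3 = 2"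
    by presburger+
  then show ?thesis
    unfolding gadget_clause_def sat_def by (simp only:) auto
qed

lemma num_sat_hard_instance_le:
  assumes "length s = m"
  shows "num_sat a (hard_instance m s) \<le> 2 * m + agreements a s"
proof -
  have "num_sat a (hard_instance m s) \<le> (\<Sum>i<m. 2 + (if a i = s ! i then 1 else 0))"
    unfolding num_sat_hard_instance sum_lessThan_3_mult by (intro sum_mono gadget_sat_le)
  also have "\<dots> = 2 * m + agreements a s"
    using assms by (subst sum.distrib) (simp add: agreements_def)
  finally show ?thesis .
qed

definition hard_instance_solution :: "nat \<Rightarrow> bool list \<Rightarrow> var \<Rightarrow> bool" where
  "hard_instance_solution m s x =
     (if x < m then s ! x else if x < 2 * m then \<not> s ! (x - m) else s ! (x - 2 * m))"

lemma opt_hard_instance: "opt (hard_instance m s) = 3 * m"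
proof -
  have le: "num_sat a (hard_instance m s) \<le> 3 * m" for a
    using sum_mono[of "{..<3 * m}" "\<lambda>j. if sat a (gadget_clause m s j) then 1 else 0" "\<lambda>_. 1 :: nat"]
    by (simp add: num_sat_hard_instance)
  have "sat (hard_instance_solution m s) (gadget_clause m s j)" if "j < 3 * m" for j
  proof -
    have "j div 3 < m" using that by auto
    then show ?thesis
      by (auto simp: gadget_clause_def sat_def hard_instance_solution_def)
  qed
  then have "num_sat (hard_instance_solution m s) (hard_instance m s) = 3 * m"
    by (simp add: num_sat_hard_instance)
  then have "3 * m \<in> range (\<lambda>a. num_sat a (hard_instance m s))"
    by (metis rangeI)
  moreover have "finite (range (\<lambda>a. num_sat a (hard_instance m s)))"
    by (rule finite_subset[of _ "{..3 * m}"]) (auto simp: le)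
  ultimately show ?thesis
    unfolding opt_def using le by (intro Max_eqI) auto
qed

lemma leaf_assignment_hard_instance:
  assumes "length p = 3 * m" "x < 3 * m"
  shows "leaf_assignment (hard_instance m s) p x = p ! x"
  using map_of_zip_nth[of "[0..<3 * m]" p x] assms by (simp add: leaf_assignment_def)

lemma ratio_hard_instance_le:
  fixes \<theta> :: real
  assumes wc: "width_cut k A" and m: "m \<ge> 1" and s: "length s = m" and "\<theta> \<ge> 0"
    and few: "\<forall>q\<in>level A (hard_instance m s) m. agreements (nth q) s < \<theta> * m"
  shows "ratio A (hard_instance m s) \<le> (2 + \<theta>) / 3"
proof -
  define I where "I = hard_instance m s"
  have I: "valid_instance I"
    using valid_hard_instance[OF m] by (simp add: I_def)
  have "real (num_sat (leaf_assignment I p) I) \<le> (2 + \<theta>) * m"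
    if p: "p \<in> level A I (nvars I)" for p
  proof -
    have "length p = 3 * m" and "take m p \<in> level A I m"
      using width_cut_level_prefixes[OF wc I _ p] by (auto simp: I_def)
    then have "agreements (leaf_assignment I p) s = agreements (nth (take m p)) s"
      unfolding agreements_def using s by (intro sum.cong) (auto simp: I_def leaf_assignment_hard_instance)
    moreover have "agreements (nth (take m p)) s < \<theta> * m"
      using few \<open>take m p \<in> level A I m\<close> by (simp add: I_def)
    ultimately show ?thesis
      using num_sat_hard_instance_le[OF s, of "leaf_assignment I p"]
      by (simp add: I_def algebra_simps)
  qed
  then have "real (alg_value A I) \<le> (2 + \<theta>) * m"
    using alg_value_le[OF wc I] \<open>\<theta> \<ge> 0\<close> by simp
  then show ?thesis
    using m by (simp add: I_def ratio_def opt_hard_instance divide_le_eq)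
qed

lemma INF_ratio_le:
  fixes \<theta> :: real
  assumes wc: "width_cut k A" and m: "m \<ge> 1" and x: "x > 1" and "\<theta> \<ge> 0"
    and small: "real (k (3 * m)) * ((1 + x) / x powr \<theta>) ^ m < 2 ^ m"
  shows "(INF I\<in>instances (3 * m). ereal (ratio A I)) \<le> ereal ((2 + \<theta>) / 3)"
proof -
  \<comment> \<open>any fixed string would do in place of \<open>replicate m False\<close>\<close>
  define L where "L = level A (hard_instance m (replicate m False)) m"
  have I: "valid_instance (hard_instance m (replicate m False))"
    using valid_hard_instance[OF m] .
  have "m \<in> {1..nvars (hard_instance m (replicate m False))}"
    using m by simp
  with wc I have "card L \<le> k (3 * m)"
    unfolding width_cut_def L_def by fastforce
  then have "real (card L) * ((1 + x) / x powr \<theta>) ^ m \<le> real (k (3 * m)) * ((1 + x) / x powr \<theta>) ^ m"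
    using x by (intro mult_right_mono) auto
  then have "real (card L) * ((1 + x) / x powr \<theta>) ^ m < 2 ^ m"
    using small by linarith
  moreover have "finite L"
    using finite_level[OF wc I, of m] by (simp add: L_def)
  ultimately obtain s where s: "length s = m" and few: "\<forall>q\<in>L. agreements (nth q) s < \<theta> * m"
    using exists_list_few_agreements[OF _ x] by blast
  have "L = level A (hard_instance m s) m"
    unfolding L_def by (rule level_hard_instance_indep)
  then have "ratio A (hard_instance m s) \<le> (2 + \<theta>) / 3"
    using ratio_hard_instance_le[OF wc m s \<open>\<theta> \<ge> 0\<close>] few by simp
  moreover have "hard_instance m s \<in> instances (3 * m)"
    using valid_hard_instance[OF m] by (simp add: instances_def)
  ultimately show ?thesis
    by (meson INF_lower2 ereal_less_eq(3))
qed

lemma asymptotic_ratio_le: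
  fixes \<theta> :: real
  assumes wc: "width_cut k A" and x: "x > 1" and "\<theta> \<ge> 0"
    and small: "\<forall>\<^sub>F m in sequentially. real (k (3 * m)) * ((1 + x) / x powr \<theta>) ^ m < 2 ^ m"
  shows "asymptotic_ratio A \<le> ereal ((2 + \<theta>) / 3)"
proof -
  define u where "u = (\<lambda>n. INF I\<in>instances n. ereal (ratio A I))"
  have "\<forall>\<^sub>F m in sequentially. (u \<circ> (\<lambda>m. 3 * m)) m \<le> ereal ((2 + \<theta>) / 3)"
    using small eventually_ge_at_top[of 1]
    by eventually_elim (use INF_ratio_le[OF wc _ x \<open>\<theta> \<ge> 0\<close>] in \<open>simp add: u_def\<close>)
  moreover have "strict_mono (\<lambda>m :: nat. 3 * m)"
    by (rule strict_monoI) simp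
  ultimately have "liminf u \<le> ereal ((2 + \<theta>) / 3)"
    using liminf_subseq_mono Liminf_le order_trans by (metis trivial_limit_sequentially)
  then show ?thesis
    unfolding asymptotic_ratio_def u_def .
qed

theorem theorem4:
  shows "\<forall>\<epsilon>::real. \<epsilon> > 0 \<longrightarrow> (\<exists>\<delta>::real. \<delta> > 0 \<and>
    (\<forall>(k::nat \<Rightarrow> nat) (A::algorithm).
       (\<forall>\<^sub>F n in sequentially. real (k n) < exp (\<delta> * real n)) \<longrightarrow> width_cut k A \<longrightarrow>
       asymptotic_ratio A < ereal (5/6 + \<epsilon>)))"
proof (intro allI impI)
  fix \<epsilon> :: real assume "\<epsilon> > 0"
  then obtain x where x: "x > 1" and base: "(1 + x) / x powr (1/2 + \<epsilon>) < 2"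
    using exists_chernoff_base by blast
  define R where "R = (1 + x) / x powr (1/2 + \<epsilon>)"
  have "R > 0" "R < 2"
    using x base by (simp_all add: R_def)
  define \<delta> where "\<delta> = ln (2 / R) / 3"
  have "\<delta> > 0"
    using \<open>R > 0\<close> \<open>R < 2\<close> by (simp add: \<delta>_def)
  moreover have "asymptotic_ratio A < ereal (5/6 + \<epsilon>)"
    if small: "\<forall>\<^sub>F n in sequentially. real (k n) < exp (\<delta> * real n)" and wc: "width_cut k A"
    for k A
  proof -
    have "exp (\<delta> * real (3 * m)) = (2 / R) ^ m" for m
      using \<open>R > 0\<close> by (simp add: \<delta>_def mult.commute[of _ "real m"] exp_of_nat_mult)
    then have "\<forall>\<^sub>F m in sequentially. real (k (3 * m)) * R ^ m < 2 ^ m"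
      using eventually_compose_filterlim[OF small, of "\<lambda>m. 3 * m"] \<open>R > 0\<close>
      by (auto elim!: eventually_mono simp: filterlim_subseq strict_mono_def
          power_divide pos_less_divide_eq)
    then have "asymptotic_ratio A \<le> ereal ((2 + (1/2 + \<epsilon>)) / 3)"
      using asymptotic_ratio_le[OF wc x, of "1/2 + \<epsilon>"] \<open>\<epsilon> > 0\<close> by (simp add: R_def)
    also have "\<dots> < ereal (5/6 + \<epsilon>)"
      using \<open>\<epsilon> > 0\<close> by simp
    finally show ?thesis .
  qed
  ultimately show "\<exists>\<delta>>0. \<forall>k A. (\<forall>\<^sub>F n in sequentially. real (k n) < exp (\<delta> * real n))
      \<longrightarrow> width_cut k A \<longrightarrow> asymptotic_ratio A < ereal (5/6 + \<epsilon>)"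
    by blast
qed

end
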